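(* Let $\rho_{AB}$ and $\sigma_B$ be quantum states, $\varepsilon\in(0,1)$, and let $S_A$ be a convex set of quantum states on register $A$. There exists an operator $M^*$ satisfying $\mathrm{Tr}[M^*\rho_{AB}]\ge1-\varepsilon$ such that for all quantum states $\tau_A\in S_A$, $$\mathrm{Tr}[M^*(\tau_A\otimes\sigma_B)]\le 2^{-\tilde{\mathrm{I}}^{\varepsilon,S_A}_{\mathrm{H}}(A:B)_{\rho_{AB},\sigma_B}}.$$
   Context: Finite-dimensional Hilbert spaces; $\log$ base 2. $\mathrm{D}^{\varepsilon}_{\mathrm{H}}(\rho\|\sigma)=\max\{-\log\mathrm{Tr}[M\sigma]: 0\preceq M\preceq \mathbb{I},\ \mathrm{Tr}[M\rho]\ge 1-\varepsilon\}$. For a convex set $S_A$ of states on $A$, $\tilde{\mathrm{I}}^{\varepsilon,S_A}_{\mathrm{H}}(A:B)_{\rho_{AB},\sigma_B}=\min_{\tau_A\in S_A}\mathrm{D}^{\varepsilon}_{\mathrm{H}}(\rho_{AB}\|\tau_A\otimes\sigma_B)$. *)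

theory Defs
  imports "HOL-Analysis.Analysis" "HOL-Library.Complex_Order"
begin

text \<open>Operators on a finite-dimensional Hilbert space with orthonormal basis indexed by
  the finite type 'n are matrices of type complex^'n^'n. A bipartite system AB has index
  type 'a \<times> 'b.\<close>

definition psd :: "complex^'n^'n \<Rightarrow> bool" where
  "psd M \<longleftrightarrow> (\<forall>v::complex^'n. 0 \<le> (\<Sum>i\<in>UNIV. \<Sum>j\<in>UNIV. cnj (v$i) * M$i$j * v$j))"

definition loewner_le :: "complex^'n^'n \<Rightarrow> complex^'n^'n \<Rightarrow> bool" where
  "loewner_le M N \<longleftrightarrow> psd (N - M)"

definition qstate :: "complex^'n^'n \<Rightarrow> bool" where
  "qstate \<rho> \<longleftrightarrow> psd \<rho> \<and> trace \<rho> = 1"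

definition tensor :: "complex^'a^'a \<Rightarrow> complex^'b^'b \<Rightarrow> complex^('a\<times>'b)^('a\<times>'b)" where
  "tensor A B = (\<chi> p q. A$(fst p)$(fst q) * B$(snd p)$(snd q))"

text \<open>Tr[M\<rho>] (real part; it is real for the Hermitian operators considered).\<close>
definition tr_prod :: "complex^'n^'n \<Rightarrow> complex^'n^'n \<Rightarrow> real" where
  "tr_prod M \<rho> = Re (trace (M ** \<rho>))"

definition test :: "complex^'n^'n \<Rightarrow> bool" where
  "test M \<longleftrightarrow> psd M \<and> loewner_le M (mat 1)"

definition neglog2 :: "real \<Rightarrow> ereal" where
  "neglog2 x = (if x \<le> 0 then \<infinity> else ereal (- log 2 x))"

text \<open>2^(-x) for x in the extended reals, with 2^(-\<infinity>) = 0
  (the value at -\<infinity> never occurs and is set to 0 arbitrarily).\<close>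
definition pow2neg :: "ereal \<Rightarrow> real" where
  "pow2neg x = (case x of ereal r \<Rightarrow> 2 powr (- r) | _ \<Rightarrow> 0)"

text \<open>Hypothesis testing relative entropy (max over tests, written as Sup; it is attained).\<close>
definition D_H :: "real \<Rightarrow> complex^'n^'n \<Rightarrow> complex^'n^'n \<Rightarrow> ereal" where
  "D_H \<epsilon> \<rho> \<sigma> = Sup {neglog2 (tr_prod M \<sigma>) | M. test M \<and> tr_prod M \<rho> \<ge> 1 - \<epsilon>}"

definition I_H_tilde :: "real \<Rightarrow> (complex^'a^'a) set \<Rightarrow> complex^('a\<times>'b)^('a\<times>'b)
    \<Rightarrow> complex^'b^'b \<Rightarrow> ereal" where
  "I_H_tilde \<epsilon> S \<rho> \<sigma> = (INF \<tau>\<in>S. D_H \<epsilon> \<rho> (tensor \<tau> \<sigma>))"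

end

theory Submission
  imports Defs
begin

text \<open>Since \<open>Tr[M(\<tau>\<otimes>\<sigma>)]\<close> is affine in the test \<open>M\<close> and in \<open>\<tau>\<close>, and the admissible tests
  form a compact convex set, a minimax argument exchanges the two optimisations: for every
  \<open>\<tau> \<in> S\<^sub>A\<close> the optimal test for \<open>\<tau>\<close> achieves at most \<open>2^{-\<tilde>I}\<close>, hence a single test achieves
  this for all \<open>\<tau>\<close> simultaneously. For two points of \<open>S\<^sub>A\<close> the minimax step comes from
  separating a compact convex subset of the plane from a closed quadrant (the normal of the
  separating line gives the mixing weight); finitely many points follow by induction, and
  arbitrary convex \<open>S\<^sub>A\<close> by compactness of the set of tests.\<close>

lemma quadrant_separator_coeff_nonneg:
  fixes a1 a2 b u :: real
  assumes "\<And>s1 s2. s1 \<le> u \<Longrightarrow> s2 \<le> u \<Longrightarrow> a1 * s1 + a2 * s2 < b"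
  shows "0 \<le> a1"
proof (rule ccontr)
  assume "\<not> 0 \<le> a1"
  then have neg: "a1 < 0" by simp
  define s where "s = u - (\<bar>b\<bar> + \<bar>a2 * u\<bar> + \<bar>a1 * u\<bar> + 1) / (- a1)"
  have "s \<le> u" using neg by (simp add: s_def divide_nonneg_neg)
  moreover have "a1 * s = a1 * u + (\<bar>b\<bar> + \<bar>a2 * u\<bar> + \<bar>a1 * u\<bar> + 1)"
    using neg by (simp add: s_def field_simps)
  ultimately show False using assms[of s u] by linarith
qed

lemma minimax_two_point:
  fixes f :: "'v::euclidean_space \<Rightarrow> 'w::real_vector \<Rightarrow> real"
  assumes affine_left: "\<And>M N x t. f ((1-t) *\<^sub>R M + t *\<^sub>R N) x = (1-t) * f M x + t * f N x"
    and affine_right: "\<And>M x y t. f M ((1-t) *\<^sub>R x + t *\<^sub>R y) = (1-t) * f M x + t * f M y"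
    and cont: "\<And>x. continuous_on UNIV (\<lambda>M. f M x)"
    and T: "compact T" "convex T"
    and cover: "\<forall>M\<in>T. f M x > u \<or> f M y > u"
  shows "\<exists>t\<in>{0..1}. \<forall>M\<in>T. f M ((1-t) *\<^sub>R x + t *\<^sub>R y) > u"
proof (cases "T = {}")
  case True
  then show ?thesis by auto
next
  case False
  define C where "C = (\<lambda>M. (f M x, f M y)) ` T"
  define Q where "Q = {p::real \<times> real. fst p \<le> u \<and> snd p \<le> u}"
  have "compact C" unfolding C_def
    by (intro compact_continuous_image T continuous_on_Pair continuous_on_subset[OF cont]) auto
  moreover have "convex C" unfolding convex_def C_def
  proof (intro ballI allI impI, elim imageE)
    fix a b :: real and p q M N
    assume ab: "0 \<le> a" "0 \<le> b" "a + b = 1"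
      and p: "p = (f M x, f M y)" "M \<in> T" and q: "q = (f N x, f N y)" "N \<in> T"
    have "a *\<^sub>R M + b *\<^sub>R N \<in> T" using T(2) ab p q unfolding convex_def by auto
    moreover have "a *\<^sub>R p + b *\<^sub>R q = (f (a *\<^sub>R M + b *\<^sub>R N) x, f (a *\<^sub>R M + b *\<^sub>R N) y)"
    proof -
      have "a = 1 - b" using ab(3) by simp
      then show ?thesis using p q by (simp add: affine_left)
    qed
    ultimately show "a *\<^sub>R p + b *\<^sub>R q \<in> (\<lambda>M. (f M x, f M y)) ` T" by blast
  qed
  moreover have "closed Q" unfolding Q_def
    by (intro closed_Collect_conj closed_Collect_le continuous_intros)
  moreover have "convex Q" unfolding Q_def convex_def by (auto intro: convex_bound_le)
  moreover have "Q \<inter> C = {}" "C \<noteq> {}" using cover False unfolding Q_def C_def by auto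
  ultimately obtain a b where "\<forall>p\<in>Q. inner a p < b" "\<forall>p\<in>C. inner a p > b"
    using separating_hyperplane_closed_compact by metis
  moreover obtain a1 a2 where a: "a = (a1, a2)" by fastforce
  ultimately have below: "\<And>s1 s2. s1 \<le> u \<Longrightarrow> s2 \<le> u \<Longrightarrow> a1 * s1 + a2 * s2 < b"
    and above: "\<And>M. M \<in> T \<Longrightarrow> a1 * f M x + a2 * f M y > b"
    unfolding Q_def C_def by auto
  have "0 \<le> a1" by (rule quadrant_separator_coeff_nonneg[OF below])
  moreover have "0 \<le> a2" by (rule quadrant_separator_coeff_nonneg) (use below in \<open>auto simp: add.commute\<close>)
  moreover obtain M0 where "M0 \<in> T" using False by auto
  then have "a1 \<noteq> 0 \<or> a2 \<noteq> 0" using above below[of u u] by force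
  ultimately have pos: "a1 + a2 > 0" by linarith
  define t where "t = a2 / (a1 + a2)"
  have "t \<in> {0..1}" using \<open>0 \<le> a1\<close> \<open>0 \<le> a2\<close> pos by (simp add: t_def field_simps)
  moreover have "f M ((1-t) *\<^sub>R x + t *\<^sub>R y) > u" if "M \<in> T" for M
  proof -
    have "1 - t = a1 / (a1 + a2)" using pos by (simp add: t_def field_simps)
    then have "f M ((1-t) *\<^sub>R x + t *\<^sub>R y) = (a1 * f M x + a2 * f M y) / (a1 + a2)"
      unfolding affine_right by (simp add: t_def add_divide_distrib)
    also have "\<dots> > u" using above[OF that] below[of u u] pos by (simp add: field_simps)
    finally show ?thesis .
  qed
  ultimately show ?thesis by blast
qed

lemma minimax_finite:
  fixes f :: "'v::euclidean_space \<Rightarrow> 'w::real_vector \<Rightarrow> real"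
  assumes affine_left: "\<And>M N x t. f ((1-t) *\<^sub>R M + t *\<^sub>R N) x = (1-t) * f M x + t * f N x"
    and affine_right: "\<And>M x y t. f M ((1-t) *\<^sub>R x + t *\<^sub>R y) = (1-t) * f M x + t * f M y"
    and cont: "\<And>x. continuous_on UNIV (\<lambda>M. f M x)"
    and F: "finite F" "F \<noteq> {}"
    and T: "compact T" "convex T"
    and cover: "\<forall>M\<in>T. \<exists>x\<in>F. f M x > u"
  shows "\<exists>x\<in>convex hull F. \<forall>M\<in>T. f M x > u"
  using F T cover
proof (induction F arbitrary: T rule: finite_ne_induct)
  case (singleton x)
  then show ?case by (auto intro: hull_inc)
next
  case (insert x F)
  define T' where "T' = T \<inter> {M. f M x \<le> u}"
  have "closed {M. f M x \<le> u}"
    by (rule closed_Collect_le[OF cont continuous_on_const])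
  then have "compact T'" unfolding T'_def by (rule compact_Int_closed[OF insert.prems(1)])
  have "convex {M. f M x \<le> u}"
  proof (rule convexI)
    fix M N :: 'v and a b :: real
    assume "M \<in> {M. f M x \<le> u}" "N \<in> {M. f M x \<le> u}" "0 \<le> a" "0 \<le> b" "a + b = 1"
    moreover have "a = 1 - b" using \<open>a + b = 1\<close> by simp
    ultimately show "a *\<^sub>R M + b *\<^sub>R N \<in> {M. f M x \<le> u}"
      by (simp add: affine_left convex_bound_le)
  qed
  then have "convex T'" unfolding T'_def by (rule convex_Int[OF insert.prems(2)])
  moreover have "\<forall>M\<in>T'. \<exists>y\<in>F. f M y > u" using insert.prems(3) unfolding T'_def by auto
  ultimately obtain x' where x': "x' \<in> convex hull F" "\<forall>M\<in>T'. f M x' > u"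
    using insert.IH \<open>compact T'\<close> by blast
  have "\<forall>M\<in>T. f M x' > u \<or> f M x > u" using x'(2) unfolding T'_def by force
  then obtain t where t: "t \<in> {0..1}" "\<forall>M\<in>T. f M ((1-t) *\<^sub>R x' + t *\<^sub>R x) > u"
    using minimax_two_point[OF affine_left affine_right cont insert.prems(1,2)] by blast
  have "x' \<in> convex hull (insert x F)" using x'(1) hull_mono[of F "insert x F"] by blast
  moreover have "x \<in> convex hull (insert x F)" by (simp add: hull_inc)
  ultimately have "(1-t) *\<^sub>R x' + t *\<^sub>R x \<in> convex hull (insert x F)"
    using t(1) by (intro convexD[OF convex_convex_hull]) auto
  with t(2) show ?case by blast
qed

lemma minimax_compact_convex:
  fixes f :: "'v::euclidean_space \<Rightarrow> 'w::real_vector \<Rightarrow> real"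
  assumes affine_left: "\<And>M N x t. f ((1-t) *\<^sub>R M + t *\<^sub>R N) x = (1-t) * f M x + t * f N x"
    and affine_right: "\<And>M x y t. f M ((1-t) *\<^sub>R x + t *\<^sub>R y) = (1-t) * f M x + t * f M y"
    and cont: "\<And>x. continuous_on UNIV (\<lambda>M. f M x)"
    and T: "compact T" "convex T" "T \<noteq> {}"
    and S: "convex S"
    and pointwise: "\<forall>x\<in>S. \<exists>M\<in>T. f M x \<le> u"
  shows "\<exists>M\<in>T. \<forall>x\<in>S. f M x \<le> u"
proof (rule ccontr)
  assume "\<not> ?thesis"
  then have "T \<subseteq> (\<Union>x\<in>S. {M. f M x > u})" by (force simp: not_le)
  then obtain F where F: "F \<subseteq> S" "finite F" "T \<subseteq> (\<Union>x\<in>F. {M. f M x > u})"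
    by (rule compactE_image[OF T(1) open_Collect_less[OF continuous_on_const cont]])
  then have "F \<noteq> {}" using T(3) by blast
  then obtain x where x: "x \<in> convex hull F" "\<forall>M\<in>T. f M x > u"
    using minimax_finite[OF affine_left affine_right cont F(2) _ T(1,2)] F(3) by blast
  have "convex hull F \<subseteq> S" using F(1) S by (rule hull_minimal)
  then obtain M where "M \<in> T" "f M x \<le> u" using x(1) pointwise by blast
  then show False using x(2) by force
qed

definition admissible_tests :: "real \<Rightarrow> complex^'n^'n \<Rightarrow> (complex^'n^'n) set" where
  "admissible_tests \<epsilon> \<rho> = {M. test M \<and> tr_prod M \<rho> \<ge> 1 - \<epsilon>}"

lemma tr_prod_eq_sum: "tr_prod M X = (\<Sum>i\<in>UNIV. \<Sum>k\<in>UNIV. Re (M$i$k * X$k$i))"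
  by (simp add: tr_prod_def trace_def matrix_matrix_mult_def Re_sum)

lemma tr_prod_add_scaleR_left:
  "tr_prod (a *\<^sub>R M + b *\<^sub>R N) X = a * tr_prod M X + b * tr_prod N X"
  unfolding tr_prod_eq_sum sum_distrib_left sum.distrib[symmetric]
  by (intro sum.cong refl) (simp add: algebra_simps)

lemma tr_prod_add_scaleR_right:
  "tr_prod M (a *\<^sub>R X + b *\<^sub>R Y) = a * tr_prod M X + b * tr_prod M Y"
  unfolding tr_prod_eq_sum sum_distrib_left sum.distrib[symmetric]
  by (intro sum.cong refl) (simp add: algebra_simps)

lemma tensor_add_scaleR_left:
  "tensor (a *\<^sub>R X + b *\<^sub>R Y) Z = a *\<^sub>R tensor X Z + b *\<^sub>R tensor Y Z"
  by (simp add: tensor_def vec_eq_iff) (simp add: scaleR_conv_of_real algebra_simps)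

lemma continuous_on_tr_prod_left: "continuous_on UNIV (\<lambda>M. tr_prod M X)"
  unfolding tr_prod_eq_sum by (intro continuous_intros)

lemma trace_tensor: "trace (tensor A B) = trace A * trace B"
proof -
  have "trace (tensor A B) = (\<Sum>p\<in>UNIV \<times> UNIV. A$fst p$fst p * B$snd p$snd p)"
    unfolding trace_def tensor_def UNIV_Times_UNIV by simp
  also have "\<dots> = (\<Sum>i\<in>UNIV. \<Sum>j\<in>UNIV. A$i$i * B$j$j)"
    by (simp add: sum.cartesian_product split_def)
  also have "\<dots> = trace A * trace B" by (simp add: trace_def sum_product)
  finally show ?thesis .
qed

lemma psd_quadratic_form_on:
  fixes P :: "complex^'n^'n" and v :: "complex^'n"
  assumes "psd P" and support: "\<And>k. k \<notin> K \<Longrightarrow> v$k = 0"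
  shows "0 \<le> (\<Sum>k\<in>K. \<Sum>l\<in>K. cnj (v$k) * P$k$l * v$l)"
proof -
  have "0 \<le> (\<Sum>k\<in>UNIV. \<Sum>l\<in>UNIV. cnj (v$k) * P$k$l * v$l)"
    using assms(1) unfolding psd_def by blast
  also have "\<dots> = (\<Sum>k\<in>K. \<Sum>l\<in>UNIV. cnj (v$k) * P$k$l * v$l)"
    by (rule sum.mono_neutral_right) (auto simp: support)
  also have "\<dots> = (\<Sum>k\<in>K. \<Sum>l\<in>K. cnj (v$k) * P$k$l * v$l)"
    by (intro sum.cong refl sum.mono_neutral_right) (auto simp: support)
  finally show ?thesis .
qed

lemma psd_diag_nonneg:
  assumes "psd (P :: complex^'n^'n)"
  shows "0 \<le> P$i$i"
  using psd_quadratic_form_on[OF assms, of "{i}" "axis i 1"] by (simp add: axis_def)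

lemma psd_two_point_form:
  fixes P :: "complex^'n^'n"
  assumes "psd P" "i \<noteq> j"
  shows "0 \<le> P$i$i + P$i$j * c + cnj c * P$j$i + cnj c * P$j$j * c"
  using psd_quadratic_form_on[OF assms(1), of "{i, j}" "\<chi> k. if k = i then 1 else if k = j then c else 0"]
    assms(2)
  by (simp add: add.assoc)

lemma test_entry_norm_le:
  fixes M :: "complex^'n^'n"
  assumes "test M"
  shows "norm (M$i$j) \<le> 2"
proof -
  have psd: "psd M" "psd (mat 1 - M)" using assms unfolding test_def loewner_le_def by auto
  have diag: "0 \<le> Re (M$k$k) \<and> Re (M$k$k) \<le> 1 \<and> Im (M$k$k) = 0" for k
    using psd_diag_nonneg[OF psd(1), of k] psd_diag_nonneg[OF psd(2), of k]
    by (simp add: less_eq_complex_def mat_def)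
  show ?thesis
  proof (cases "i = j")
    case True
    then show ?thesis using diag[of i] cmod_le[of "M$i$i"] by simp
  next
    case False
    have "\<bar>Re (M$i$j)\<bar> \<le> 1" "\<bar>Im (M$i$j)\<bar> \<le> 1"
      using psd_two_point_form[OF psd(1) False, of 1] psd_two_point_form[OF psd(1) False, of "-1"]
        psd_two_point_form[OF psd(1) False, of \<i>] psd_two_point_form[OF psd(1) False, of "-\<i>"]
        diag[of i] diag[of j]
      by (auto simp: less_eq_complex_def)
    then show ?thesis using cmod_le[of "M$i$j"] by simp
  qed
qed

lemma closed_psd_preimage:
  fixes h :: "complex^'m^'m \<Rightarrow> complex^'n^'n"
  assumes "continuous_on UNIV h"
  shows "closed {M. psd (h M)}"
proof -
  let ?q = "\<lambda>v M. \<Sum>i\<in>UNIV. \<Sum>j\<in>UNIV. cnj (v$i) * h M $i$j * v$j"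
  have "{M. psd (h M)} = (\<Inter>v. {M. 0 \<le> Re (?q v M)} \<inter> {M. Im (?q v M) = 0})"
    by (auto simp: psd_def less_eq_complex_def)
  moreover have entry_cont: "continuous_on UNIV (\<lambda>M. h M $ i $ j)" for i j
    by (intro continuous_intros assms)
  ultimately show ?thesis
    by (simp only:)
      (intro closed_INT ballI closed_Int closed_Collect_le closed_Collect_eq continuous_intros entry_cont)
qed

lemma norm_vec_le_sum_norm: "norm (x::'a::real_normed_vector^'n) \<le> (\<Sum>i\<in>UNIV. norm (x$i))"
  by (simp add: norm_vec_def L2_set_le_sum)

lemma compact_admissible_tests:
  fixes \<rho> :: "complex^'n^'n"
  shows "compact (admissible_tests \<epsilon> \<rho>)"
proof (rule compact_eq_bounded_closed[THEN iffD2, OF conjI])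
  have "norm M \<le> real (CARD('n) * CARD('n)) * 2" if "test (M :: complex^'n^'n)" for M
  proof -
    have "norm M \<le> (\<Sum>i\<in>UNIV. \<Sum>j\<in>UNIV. norm (M$i$j))"
      by (rule order_trans[OF norm_vec_le_sum_norm sum_mono[OF norm_vec_le_sum_norm]])
    also have "\<dots> \<le> (\<Sum>i\<in>(UNIV::'n set). \<Sum>j\<in>(UNIV::'n set). 2)"
      by (intro sum_mono test_entry_norm_le[OF that])
    finally show ?thesis by simp
  qed
  then show "bounded (admissible_tests \<epsilon> \<rho>)"
    unfolding bounded_iff admissible_tests_def by blast
  have "admissible_tests \<epsilon> \<rho> =
      {M. psd M} \<inter> {M. psd (mat 1 - M)} \<inter> {M. 1 - \<epsilon> \<le> tr_prod M \<rho>}"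
    by (auto simp: admissible_tests_def test_def loewner_le_def)
  moreover have "closed {M :: complex^'n^'n. psd M}"
    using closed_psd_preimage[of "\<lambda>M. M"] by (simp add: continuous_on_id)
  moreover have "closed {M :: complex^'n^'n. psd (mat 1 - M)}"
    by (intro closed_psd_preimage continuous_intros)
  ultimately show "closed (admissible_tests \<epsilon> \<rho>)"
    by (simp only:) (intro closed_Int closed_Collect_le continuous_intros continuous_on_tr_prod_left)
qed

lemma psd_add_scaleR:
  fixes M N :: "complex^'n^'n"
  assumes "psd M" "psd N" "0 \<le> a" "0 \<le> b"
  shows "psd (a *\<^sub>R M + b *\<^sub>R N)"
  unfolding psd_def
proof
  fix v :: "complex^'n"
  let ?q = "\<lambda>M::complex^'n^'n. \<Sum>i\<in>UNIV. \<Sum>j\<in>UNIV. cnj (v$i) * M$i$j * v$j"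
  have "?q (a *\<^sub>R M + b *\<^sub>R N) = of_real a * ?q M + of_real b * ?q N"
    unfolding sum_distrib_left sum.distrib[symmetric]
    by (intro sum.cong refl)
      (simp only: vector_add_component vector_scaleR_component, simp add: scaleR_conv_of_real algebra_simps)
  moreover have "0 \<le> ?q M" "0 \<le> ?q N" using assms(1,2) unfolding psd_def by blast+
  ultimately show "0 \<le> ?q (a *\<^sub>R M + b *\<^sub>R N)"
    using assms(3,4) by (simp add: less_eq_complex_def)
qed

lemma convex_admissible_tests:
  fixes \<rho> :: "complex^'n^'n"
  shows "convex (admissible_tests \<epsilon> \<rho>)"
proof (rule convexI)
  fix M N :: "complex^'n^'n" and a b :: real
  assume "M \<in> admissible_tests \<epsilon> \<rho>" "N \<in> admissible_tests \<epsilon> \<rho>"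
    and ab: "0 \<le> a" "0 \<le> b" "a + b = 1"
  then have M: "psd M" "psd (mat 1 - M)" "tr_prod M \<rho> \<ge> 1 - \<epsilon>"
    and N: "psd N" "psd (mat 1 - N)" "tr_prod N \<rho> \<ge> 1 - \<epsilon>"
    by (auto simp: admissible_tests_def test_def loewner_le_def)
  have "mat 1 - (a *\<^sub>R M + b *\<^sub>R N) = a *\<^sub>R (mat 1 - M) + b *\<^sub>R (mat 1 - N)"
    using ab(3) by (simp add: algebra_simps flip: scaleR_add_left)
  moreover have "a * tr_prod M \<rho> + b * tr_prod N \<rho> \<ge> a * (1 - \<epsilon>) + b * (1 - \<epsilon>)"
    using M(3) N(3) ab by (intro add_mono mult_left_mono) auto
  ultimately show "a *\<^sub>R M + b *\<^sub>R N \<in> admissible_tests \<epsilon> \<rho>"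
    using M N ab
    by (auto simp: admissible_tests_def test_def loewner_le_def psd_add_scaleR tr_prod_add_scaleR_left
        simp flip: distrib_right)
qed

lemma test_mat_1: "test (mat 1 :: complex^'n^'n)"
proof -
  have "psd (mat 1 :: complex^'n^'n)"
    unfolding psd_def
  proof
    fix v :: "complex^'n"
    have "(\<Sum>i\<in>UNIV. \<Sum>j\<in>UNIV. cnj (v$i) * mat 1 $ i $ j * v$j) = (\<Sum>i\<in>UNIV. cnj (v$i) * v$i)"
    proof -
      have "cnj (v$i) * mat 1 $ i $ j * v$j = (if i = j then cnj (v$i) * v$j else 0)" for i j
        by (simp add: mat_def)
      then show ?thesis by simp
    qed
    also have "\<dots> \<ge> 0" by (intro sum_nonneg) (simp add: less_eq_complex_def)
    finally show "0 \<le> (\<Sum>i\<in>UNIV. \<Sum>j\<in>UNIV. cnj (v$i) * mat 1 $ i $ j * v$j)" .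
  qed
  moreover have "psd (0 :: complex^'n^'n)" by (simp add: psd_def)
  ultimately show ?thesis by (simp add: test_def loewner_le_def)
qed

lemma mat_1_mem_admissible_tests:
  assumes "qstate \<rho>" "0 \<le> \<epsilon>"
  shows "mat 1 \<in> admissible_tests \<epsilon> \<rho>"
  using assms test_mat_1 by (simp add: admissible_tests_def tr_prod_def qstate_def)

lemma neglog2_antimono: "x \<le> y \<Longrightarrow> neglog2 y \<le> neglog2 x"
  by (auto simp: neglog2_def)

lemma le_pow2neg_if_le_neglog2:
  assumes "x \<noteq> -\<infinity>" "x \<le> neglog2 y"
  shows "y \<le> pow2neg x"
proof (cases "y \<le> 0")
  case True
  moreover have "0 \<le> pow2neg x" by (cases x) (auto simp: pow2neg_def)
  ultimately show ?thesis by linarith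
next
  case False
  with assms obtain r where r: "x = ereal r" "r \<le> - log 2 y"
    by (cases x) (auto simp: neglog2_def)
  then have "2 powr (log 2 y) \<le> 2 powr (- r)" by simp
  with False show ?thesis by (simp add: r pow2neg_def)
qed

lemma D_H_eq_Sup_admissible_tests:
  "D_H \<epsilon> \<rho> \<sigma> = (SUP M\<in>admissible_tests \<epsilon> \<rho>. neglog2 (tr_prod M \<sigma>))"
  unfolding D_H_def admissible_tests_def by (rule arg_cong[where f = Sup]) auto

lemma D_H_attained:
  fixes \<rho> \<sigma> :: "complex^'n^'n"
  assumes "qstate \<rho>" "0 \<le> \<epsilon>"
  obtains M where "M \<in> admissible_tests \<epsilon> \<rho>" "D_H \<epsilon> \<rho> \<sigma> = neglog2 (tr_prod M \<sigma>)"
proof -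
  obtain M where M: "M \<in> admissible_tests \<epsilon> \<rho>"
    and min: "\<forall>N\<in>admissible_tests \<epsilon> \<rho>. tr_prod M \<sigma> \<le> tr_prod N \<sigma>"
    using continuous_attains_inf[OF compact_admissible_tests _
        continuous_on_subset[OF continuous_on_tr_prod_left]]
      mat_1_mem_admissible_tests[OF assms] by blast
  have "D_H \<epsilon> \<rho> \<sigma> = neglog2 (tr_prod M \<sigma>)"
    unfolding D_H_eq_Sup_admissible_tests
    by (rule antisym) (auto intro: SUP_upper SUP_least neglog2_antimono M min[rule_format])
  with M that show thesis by blast
qed

lemma D_H_nonneg:
  fixes \<rho> X :: "complex^'n^'n"
  assumes "qstate \<rho>" "0 \<le> \<epsilon>" "trace X = 1"
  shows "0 \<le> D_H \<epsilon> \<rho> X"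
proof -
  have "neglog2 (tr_prod (mat 1) X) = 0"
    using assms(3) by (simp add: tr_prod_def neglog2_def)
  then show ?thesis
    unfolding D_H_eq_Sup_admissible_tests
    by (metis SUP_upper mat_1_mem_admissible_tests[OF assms(1,2)])
qed

lemma I_H_tilde_nonneg:
  assumes "qstate \<rho>" "qstate \<sigma>" "0 \<le> \<epsilon>" "\<forall>\<tau>\<in>S. qstate \<tau>"
  shows "0 \<le> I_H_tilde \<epsilon> S \<rho> \<sigma>"
  unfolding I_H_tilde_def
  using assms by (intro INF_greatest D_H_nonneg) (auto simp: trace_tensor qstate_def)

theorem lemma5:
  fixes \<rho> :: "complex^('a::finite\<times>'b::finite)^('a\<times>'b)"
    and \<sigma> :: "complex^'b^'b"
    and S :: "(complex^'a^'a) set"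
    and \<epsilon> :: real
  assumes "qstate \<rho>" and "qstate \<sigma>"
    and "0 < \<epsilon>" and "\<epsilon> < 1"
    and "convex S" and "\<forall>\<tau>\<in>S. qstate \<tau>"
  shows "\<exists>M. test M \<and> tr_prod M \<rho> \<ge> 1 - \<epsilon> \<and>
           (\<forall>\<tau>\<in>S. tr_prod M (tensor \<tau> \<sigma>) \<le> pow2neg (I_H_tilde \<epsilon> S \<rho> \<sigma>))"
proof -
  let ?I = "I_H_tilde \<epsilon> S \<rho> \<sigma>" and ?T = "admissible_tests \<epsilon> \<rho>"
  have "\<exists>M\<in>?T. \<forall>\<tau>\<in>S. tr_prod M (tensor \<tau> \<sigma>) \<le> pow2neg ?I"
  proof (rule minimax_compact_convex[where f = "\<lambda>M \<tau>. tr_prod M (tensor \<tau> \<sigma>)"])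
    show "?T \<noteq> {}" using mat_1_mem_admissible_tests assms(1,3) by (metis empty_iff less_imp_le)
    show "\<forall>\<tau>\<in>S. \<exists>M\<in>?T. tr_prod M (tensor \<tau> \<sigma>) \<le> pow2neg ?I"
    proof
      fix \<tau> assume "\<tau> \<in> S"
      obtain M where M: "M \<in> ?T" "D_H \<epsilon> \<rho> (tensor \<tau> \<sigma>) = neglog2 (tr_prod M (tensor \<tau> \<sigma>))"
        using D_H_attained assms(1,3) by (metis less_imp_le)
      have "?I \<le> D_H \<epsilon> \<rho> (tensor \<tau> \<sigma>)"
        unfolding I_H_tilde_def using \<open>\<tau> \<in> S\<close> by (rule INF_lower)
      moreover have "?I \<noteq> -\<infinity>" using I_H_tilde_nonneg[of \<rho> \<sigma> \<epsilon> S] assms by auto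
      ultimately have "tr_prod M (tensor \<tau> \<sigma>) \<le> pow2neg ?I"
        by (intro le_pow2neg_if_le_neglog2) (simp_all add: M(2))
      with M(1) show "\<exists>M\<in>?T. tr_prod M (tensor \<tau> \<sigma>) \<le> pow2neg ?I" by blast
    qed
  qed (simp_all add: tr_prod_add_scaleR_left tr_prod_add_scaleR_right tensor_add_scaleR_left
      continuous_on_tr_prod_left compact_admissible_tests convex_admissible_tests assms(5))
  then show ?thesis by (auto simp: admissible_tests_def)
qed

end
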